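(* Let $(N,C,\mathbf{A},k)$ be an instance with $|N|=n$ and let $\lambda\in[0,\frac{n}{k^2})$. Every committee output by $\lambda$-LS-PAV (from any initial committee) — i.e., every $W\subseteq C$ with $|W|=k$ such that there are no $c^+\in C\setminus W$, $c^-\in W$ with $\Delta(W,c^+,c^-)\ge\lambda$ — has EJR degree at least $\frac{n}{k(k+1)}-\lambda\frac{k}{k+1}$.
   Context: An instance consists of voters $N=\{1,\dots,n\}$, candidates $C$, approval ballots $A_i\subseteq C$ for $i\in N$, and a committee size $k$ with $1\le k\le|C|$. For $\ell\in\mathbb{N}$, $N'\subseteq N$ is an $\ell$-cohesive group if $|N'|\ge\ell n/k$ and $|\bigcap_{i\in N'}A_i|\ge\ell$. A size-$k$ committee $W$ achieves EJR degree $c$ if for every $\ell\in\{1,\dots,k\}$ every $\ell$-cohesive group contains at least $c$ voters $i$ with $|A_i\cap W|\ge\ell$. The PAV-score of $W$ is $s_{\mathrm{PAV}}(W)=\sum_{i=1}^n\sum_{j=1}^{|A_i\cap W|}\frac1j$, and $\Delta(W,c^+,c^-)=s_{\mathrm{PAV}}((W\setminus\{c^-\})\cup\{c^+\})-s_{\mathrm{PAV}}(W)$. The algorithm $\lambda$-LS-PAV starts from an arbitrary size-$k$ committee $W$ and, while there exist $c^+\notin W$ and $c^-\in W$ with $\Delta(W,c^+,c^-)\ge\lambda$, replaces $W$ by $(W\setminus\{c^-\})\cup\{c^+\}$; it then outputs $W$. *)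

theory Defs
  imports Complex_Main
begin

definition abc_instance :: "'v set \<Rightarrow> 'c set \<Rightarrow> ('v \<Rightarrow> 'c set) \<Rightarrow> nat \<Rightarrow> bool" where
  "abc_instance N C A k \<longleftrightarrow> finite N \<and> N \<noteq> {} \<and> finite C \<and> (\<forall>i\<in>N. A i \<subseteq> C)
     \<and> 1 \<le> k \<and> k \<le> card C"

definition cohesive :: "'v set \<Rightarrow> ('v \<Rightarrow> 'c set) \<Rightarrow> nat \<Rightarrow> nat \<Rightarrow> 'v set \<Rightarrow> bool" where
  "cohesive N A k l N' \<longleftrightarrow> N' \<subseteq> N \<and> real (card N') \<ge> real l * real (card N) / real k
     \<and> card (\<Inter>i\<in>N'. A i) \<ge> l"

definition ejr_degree :: "'v set \<Rightarrow> ('v \<Rightarrow> 'c set) \<Rightarrow> nat \<Rightarrow> 'c set \<Rightarrow> real \<Rightarrow> bool" where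
  "ejr_degree N A k W c \<longleftrightarrow> (\<forall>l\<in>{1..k}. \<forall>N'. cohesive N A k l N' \<longrightarrow>
      real (card {i\<in>N'. card (A i \<inter> W) \<ge> l}) \<ge> c)"

definition pav_score :: "'v set \<Rightarrow> ('v \<Rightarrow> 'c set) \<Rightarrow> 'c set \<Rightarrow> real" where
  "pav_score N A W = (\<Sum>i\<in>N. \<Sum>j=1..card (A i \<inter> W). 1 / real j)"

definition pav_delta :: "'v set \<Rightarrow> ('v \<Rightarrow> 'c set) \<Rightarrow> 'c set \<Rightarrow> 'c \<Rightarrow> 'c \<Rightarrow> real" where
  "pav_delta N A W cp cm = pav_score N A ((W - {cm}) \<union> {cp}) - pav_score N A W"

definition ls_pav_output :: "'v set \<Rightarrow> 'c set \<Rightarrow> ('v \<Rightarrow> 'c set) \<Rightarrow> nat \<Rightarrow> real \<Rightarrow> 'c set \<Rightarrow> bool" where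
  "ls_pav_output N C A k lam W \<longleftrightarrow> W \<subseteq> C \<and> card W = k \<and>
     \<not> (\<exists>cp\<in>C - W. \<exists>cm\<in>W. pav_delta N A W cp cm \<ge> lam)"

end

theory Submission
  imports Defs "HOL-Analysis.Harmonic_Numbers"
begin

text \<open>Let \<open>N'\<close> be \<open>l\<close>-cohesive and \<open>S \<subseteq> N'\<close> the voters with at least \<open>l\<close> approved
  members of \<open>W\<close>; if all commonly approved candidates of \<open>N'\<close> lie in \<open>W\<close> then \<open>S = N'\<close>.
  Otherwise take a commonly approved \<open>c \<notin> W\<close> and sum the score changes of the \<open>k\<close> swaps
  bringing in \<open>c\<close>. A voter with \<open>a\<close> approved members of \<open>W\<close> contributes at least
  \<open>(k + 1) / (a + 1) - 1\<close> if she approves \<open>c\<close> and at least \<open>-1\<close> otherwise, and local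
  optimality bounds the total by \<open>k \<lambda>\<close>. Each voter of \<open>N' - S\<close> has \<open>a + 1 \<le> l\<close>, so
  \<open>(k + 1) (|N'| - |S|) / l < n + k \<lambda>\<close>, which together with \<open>|N'| \<ge> l n / k\<close> yields
  \<open>|S| > l (n / (k (k + 1)) - \<lambda> k / (k + 1))\<close>.\<close>

definition pav_marginal :: "'v set \<Rightarrow> ('v \<Rightarrow> 'c set) \<Rightarrow> 'c set \<Rightarrow> 'c \<Rightarrow> real" where
  "pav_marginal N A W c = (\<Sum>i\<in>N. if c \<in> A i then 1 / (real (card (A i \<inter> W)) + 1) else 0)"

lemma pav_score_harm: "pav_score N A W = (\<Sum>i\<in>N. harm (card (A i \<inter> W)))"
  unfolding pav_score_def harm_def by (simp add: divide_inverse)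

lemma card_Int_swap:
  assumes "finite W" "cp \<notin> W" "cm \<in> W"
  shows "card (A \<inter> (W - {cm} \<union> {cp})) =
    (if cp \<in> A then (if cm \<in> A then card (A \<inter> W) else Suc (card (A \<inter> W)))
     else (if cm \<in> A then card (A \<inter> W) - 1 else card (A \<inter> W)))"
proof -
  have "A \<inter> (W - {cm} \<union> {cp}) = (if cp \<in> A then insert cp (A \<inter> W - {cm}) else A \<inter> W - {cm})"
    by auto
  moreover have "card (A \<inter> W - {cm}) = (if cm \<in> A then card (A \<inter> W) - 1 else card (A \<inter> W))"
    using assms by auto
  moreover have "cm \<in> A \<Longrightarrow> card (A \<inter> W) > 0"
    using assms by (auto simp: card_gt_0_iff)
  ultimately show ?thesis
    using assms by auto
qed

lemma harm_card_Int_swap: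
  assumes "finite W" "cp \<notin> W" "cm \<in> W"
  shows "harm (card (A \<inter> (W - {cm} \<union> {cp}))) - harm (card (A \<inter> W)) =
    (if cp \<in> A \<and> cm \<notin> A then 1 / (real (card (A \<inter> W)) + 1)
     else if cp \<notin> A \<and> cm \<in> A then - 1 / real (card (A \<inter> W)) else (0 :: real))"
proof (cases "cm \<in> A")
  case True
  then obtain b where "card (A \<inter> W) = Suc b"
    using assms by (metis card_0_eq disjoint_iff finite_Int not0_implies_Suc)
  then show ?thesis
    using card_Int_swap[OF assms, of A] True by (simp add: harm_Suc divide_inverse)
next
  case False
  then show ?thesis
    using card_Int_swap[OF assms, of A] by (simp add: harm_Suc divide_inverse add_ac)
qed

lemma sum_harm_swap_ge:
  assumes "finite W" "cp \<notin> W"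
  shows "(real (card W) + 1) * (if cp \<in> A then 1 / (real (card (A \<inter> W)) + 1) else 0) - 1
    \<le> (\<Sum>cm\<in>W. harm (card (A \<inter> (W - {cm} \<union> {cp}))) - harm (card (A \<inter> W)) :: real)"
proof -
  define a where "a = card (A \<inter> W)"
  have card_W: "card W = a + card (W - A)"
    using assms(1) card_Int_Diff[of W A] by (simp add: a_def Int_commute)
  have "(\<Sum>cm\<in>W. harm (card (A \<inter> (W - {cm} \<union> {cp}))) - harm a :: real)
    = (\<Sum>cm\<in>W. if cm \<in> A then (if cp \<in> A then 0 else - 1 / real a)
                 else (if cp \<in> A then 1 / (real a + 1) else 0))"
  proof (rule sum.cong)
    fix cm assume "cm \<in> W"
    from harm_card_Int_swap[OF assms this, of A]
    show "harm (card (A \<inter> (W - {cm} \<union> {cp}))) - harm a =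
      (if cm \<in> A then (if cp \<in> A then 0 else - 1 / real a)
       else (if cp \<in> A then 1 / (real a + 1) else 0))"
      by (auto simp: a_def)
  qed simp
  also have "\<dots> = (if cp \<in> A then real (card (W - A)) / (real a + 1) else - real a / real a)"
    using assms(1) by (simp add: sum.If_cases a_def Int_commute flip: Diff_eq)
  finally have sum_eq: "(\<Sum>cm\<in>W. harm (card (A \<inter> (W - {cm} \<union> {cp}))) - harm a :: real)
    = (if cp \<in> A then real (card (W - A)) / (real a + 1) else - real a / real a)" .
  show ?thesis
  proof (cases "cp \<in> A")
    case True
    have "(real (card W) + 1) * (1 / (real a + 1)) - 1 = real (card (W - A)) / (real a + 1)"
      using card_W by (simp add: field_simps)
    with True sum_eq show ?thesis
      unfolding a_def[symmetric] by simp
  next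
    case False
    with sum_eq show ?thesis
      unfolding a_def[symmetric] by (cases "a = 0") simp_all
  qed
qed

lemma sum_pav_delta_ge:
  assumes "finite W" "cp \<notin> W"
  shows "(real (card W) + 1) * pav_marginal N A W cp - real (card N)
    \<le> (\<Sum>cm\<in>W. pav_delta N A W cp cm)"
proof -
  have "(real (card W) + 1) * pav_marginal N A W cp - real (card N)
    = (\<Sum>i\<in>N. (real (card W) + 1) * (if cp \<in> A i then 1 / (real (card (A i \<inter> W)) + 1) else 0) - 1)"
    by (simp add: pav_marginal_def sum_subtractf sum_distrib_left)
  also have "\<dots> \<le> (\<Sum>i\<in>N. \<Sum>cm\<in>W. harm (card (A i \<inter> (W - {cm} \<union> {cp}))) - harm (card (A i \<inter> W)))"
    using assms by (intro sum_mono sum_harm_swap_ge)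
  also have "\<dots> = (\<Sum>cm\<in>W. pav_delta N A W cp cm)"
    unfolding pav_delta_def pav_score_harm by (subst sum.swap) (simp add: sum_subtractf)
  finally show ?thesis .
qed

lemma ls_pav_output_sum_pav_delta_less:
  assumes "ls_pav_output N C A k lam W" "1 \<le> k" "cp \<in> C - W"
  shows "(\<Sum>cm\<in>W. pav_delta N A W cp cm) < real k * lam"
proof -
  have "W \<noteq> {}" "finite W" "card W = k"
    using assms(1,2) unfolding ls_pav_output_def by (auto intro: card_ge_0_finite)
  moreover have "pav_delta N A W cp cm < lam" if "cm \<in> W" for cm
    using assms(1,3) that unfolding ls_pav_output_def by (auto simp: not_le)
  ultimately show ?thesis
    using sum_strict_mono[of W "pav_delta N A W cp" "\<lambda>_. lam"] by simp
qed

lemma unsatisfied_le_pav_marginal: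
  assumes "finite N" "N' \<subseteq> N" "cp \<in> (\<Inter>i\<in>N'. A i)"
  shows "(real (card N') - real (card {i\<in>N'. l \<le> card (A i \<inter> W)})) / real l
    \<le> pav_marginal N A W cp"
proof -
  define S where "S = {i\<in>N'. l \<le> card (A i \<inter> W)}"
  have "finite N'" "S \<subseteq> N'"
    using assms(1,2) finite_subset unfolding S_def by auto
  then have "card (N' - S) = card N' - card S" "card S \<le> card N'"
    by (auto simp: card_Diff_subset card_mono finite_subset)
  then have "(real (card N') - real (card S)) / real l = (\<Sum>i\<in>N' - S. 1 / real l)"
    by (simp add: of_nat_diff)
  also have "\<dots> \<le> (\<Sum>i\<in>N' - S. 1 / (real (card (A i \<inter> W)) + 1))"
    by (intro sum_mono divide_left_mono) (auto simp: S_def)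
  also have "\<dots> = (\<Sum>i\<in>N' - S. if cp \<in> A i then 1 / (real (card (A i \<inter> W)) + 1) else 0)"
    using assms(3) by (intro sum.cong) auto
  also have "\<dots> \<le> pav_marginal N A W cp"
    unfolding pav_marginal_def using assms(1,2) by (intro sum_mono2) auto
  finally show ?thesis
    unfolding S_def .
qed

lemma ejr_bound_arith:
  fixes n k l m s G lam :: real
  assumes "1 \<le> k" "1 \<le> l" "l * n / k \<le> m" "(m - s) / l \<le> G"
    and "(k + 1) * G - n < k * lam" "0 \<le> s"
  shows "n / (k * (k + 1)) - lam * k / (k + 1) \<le> s"
proof -
  define B where "B = n / (k * (k + 1)) - lam * k / (k + 1)"
  have "(k + 1) * (m - s) \<le> (k + 1) * (l * G)"
    using assms(1,2,4) by (intro mult_left_mono) (auto simp: divide_le_eq mult.commute)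
  also have "\<dots> = l * ((k + 1) * G)"
    by (simp add: algebra_simps)
  also have "\<dots> < l * (n + k * lam)"
    using assms(2,5) by (intro mult_strict_left_mono) auto
  finally have "(k + 1) * (l * n / k) - l * (n + k * lam) < (k + 1) * s"
    using assms(1,3) mult_left_mono[OF assms(3), of "k + 1"] by (simp add: algebra_simps)
  also have "(k + 1) * (l * n / k) - l * (n + k * lam) = (k + 1) * (l * B)"
    using assms(1) by (simp add: B_def divide_simps) (simp add: algebra_simps)
  finally have "l * B < s"
    using assms(1) by simp
  then show ?thesis
    using assms(2,6) mult_right_mono[of 1 l B] unfolding B_def[symmetric] by (cases "B \<ge> 0") auto
qed

lemma cohesive_nonempty:
  assumes "abc_instance N C A k" "cohesive N A k l N'" "1 \<le> l"
  shows "N' \<noteq> {}"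
proof -
  have "0 < real l * real (card N) / real k"
    using assms(1,3) unfolding abc_instance_def by (auto simp: card_gt_0_iff)
  then show ?thesis
    using assms(2) unfolding cohesive_def by auto
qed

lemma cohesive_all_satisfied:
  assumes "cohesive N A k l N'" "finite W" "(\<Inter>i\<in>N'. A i) \<subseteq> W"
  shows "{i\<in>N'. l \<le> card (A i \<inter> W)} = N'"
proof -
  have "l \<le> card (A i \<inter> W)" if "i \<in> N'" for i
  proof -
    have "(\<Inter>j\<in>N'. A j) \<subseteq> A i \<inter> W"
      using assms(3) that by blast
    with assms(2) have "card (\<Inter>j\<in>N'. A j) \<le> card (A i \<inter> W)"
      by (simp add: card_mono)
    with assms(1) show ?thesis
      unfolding cohesive_def by simp
  qed
  then show ?thesis
    by auto
qed

lemma ls_pav_output_cohesive_satisfied_ge: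
  assumes "abc_instance N C A k" "ls_pav_output N C A k lam W" "cohesive N A k l N'" "1 \<le> l"
    and "cp \<in> (\<Inter>i\<in>N'. A i)" "cp \<notin> W"
  shows "real (card N) / (real k * (real k + 1)) - lam * real k / (real k + 1)
    \<le> real (card {i\<in>N'. l \<le> card (A i \<inter> W)})"
proof -
  have inst: "finite N" "\<forall>i\<in>N. A i \<subseteq> C" "1 \<le> k"
    using assms(1) unfolding abc_instance_def by auto
  have W: "card W = k" "finite W"
    using assms(2) inst(3) unfolding ls_pav_output_def by (auto intro: card_ge_0_finite)
  have N': "N' \<subseteq> N" "real l * real (card N) / real k \<le> real (card N')"
    using assms(3) unfolding cohesive_def by auto
  have "cp \<in> C"
    using cohesive_nonempty[OF assms(1,3,4)] N'(1) inst(2) assms(5) by auto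
  then have "(\<Sum>cm\<in>W. pav_delta N A W cp cm) < real k * lam"
    using ls_pav_output_sum_pav_delta_less[OF assms(2) inst(3)] assms(6) by blast
  then have "(real k + 1) * pav_marginal N A W cp - real (card N) < real k * lam"
    using sum_pav_delta_ge[OF W(2) assms(6), where N = N and A = A] unfolding W(1) by linarith
  from ejr_bound_arith[OF _ _ N'(2) unsatisfied_le_pav_marginal[OF inst(1) N'(1) assms(5)] this]
  show ?thesis
    using inst(3) assms(4) by simp
qed

theorem proposition3:
  fixes N :: "'v set" and C :: "'c set" and A :: "'v \<Rightarrow> 'c set" and k :: nat
    and lam :: real and W :: "'c set"
  assumes "abc_instance N C A k"
    and "0 \<le> lam" and "lam < real (card N) / (real k)^2"
    and "ls_pav_output N C A k lam W"
  shows "ejr_degree N A k W (real (card N) / (real k * (real k + 1)) - lam * real k / (real k + 1))"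
  unfolding ejr_degree_def
proof (intro ballI allI impI)
  fix l N' assume l: "l \<in> {1..k}" and coh: "cohesive N A k l N'"
  show "real (card N) / (real k * (real k + 1)) - lam * real k / (real k + 1)
    \<le> real (card {i\<in>N'. l \<le> card (A i \<inter> W)})"
  proof (cases "(\<Inter>i\<in>N'. A i) \<subseteq> W")
    case True
    have "finite W"
      using assms(4) l unfolding ls_pav_output_def by (auto intro: card_ge_0_finite)
    have "real (card N) / (real k * (real k + 1)) \<le> real (card N) / real k"
      using l by (intro frac_le) auto
    also have "\<dots> \<le> real l * real (card N) / real k"
      using l by (intro divide_right_mono) (auto simp: mult_le_cancel_right1)
    also have "\<dots> \<le> real (card N')"
      using coh unfolding cohesive_def by simp
    finally have "real (card N) / (real k * (real k + 1)) \<le> real (card N')" .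
    moreover have "0 \<le> lam * real k / (real k + 1)"
      using assms(2) by simp
    ultimately show ?thesis
      unfolding cohesive_all_satisfied[OF coh \<open>finite W\<close> True] by linarith
  next
    case False
    then show ?thesis
      using ls_pav_output_cohesive_satisfied_ge[OF assms(1,4) coh] l by auto
  qed
qed

end
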